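(* Let $p\in(1,2]$ and let $\varphi:\mathbb{R}^n\to\mathbb{R}\cup\{+\infty\}$ be proper and lower semicontinuous. Suppose $\bar x=0$ is a $p$-calm point of $\varphi$ with constant $M>0$, $\varphi(0)=0$, and $\varphi$ is $q$-prox-regular with some $q\ge2$ at $\bar x=0$ for $\bar\zeta=0\in\partial\varphi(0)$ with constants $\varepsilon<\frac12$ and $\rho>0$. Then for each $\gamma\in\big(0,\min\{\frac{2^{1-p}}{Mp},\frac{\kappa_p(2\varepsilon)^{p-2}}{\rho}\}\big)$ there exists a neighborhood $U\subseteq\mathbb{B}(0;\varepsilon)$ such that $$\|\operatorname{prox}^p_{\gamma\varphi}(x_2)-\operatorname{prox}^p_{\gamma\varphi}(x_1)\|\le L_p\|x_2-x_1\|^{1/q}\quad\forall x_1,x_2\in U,$$ and $\varphi^p_\gamma$ is differentiable on $U$ with $$\|\nabla\varphi^p_\gamma(x_2)-\nabla\varphi^p_\gamma(x_1)\|\le\mathcal{L}_p\|x_2-x_1\|^{\frac{p-1}{q}}\quad\forall x_1,x_2\in U,$$ where $L_p:=\Big(\frac{4\varepsilon(\kappa_p+1)}{\kappa_p-\rho\gamma(2\varepsilon)^{2-p}}\Big)^{1/q}$ and $\mathcal{L}_p:=\frac{2^{2-p}}{\gamma}\big((2\varepsilon)^{\frac{q-1}{q}}+L_p\big)^{p-1}$.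
   Context: $\operatorname{prox}^p_{\gamma\varphi}(x):=\operatorname{argmin}_{y}\big(\varphi(y)+\frac{1}{p\gamma}\|x-y\|^p\big)$ (single-valued on $U$ under the conclusion), $\varphi^p_\gamma(x):=\inf_y\big(\varphi(y)+\frac{1}{p\gamma}\|x-y\|^p\big)$. $\bar x$ is a $p$-calm point with constant $M>0$ if $\varphi(x)+M\|x-\bar x\|^p>\varphi(\bar x)$ for all $x\neq\bar x$. $\partial$ is the Mordukhovich (limiting) subdifferential. $\varphi$ is $q$-prox-regular ($q\ge2$) at $\bar x$ for $\bar\zeta\in\partial\varphi(\bar x)$ with constants $\varepsilon>0,\rho\ge0$ if $\varphi(x')\ge\varphi(x)+\langle\zeta,x'-x\rangle-\frac\rho2\|x'-x\|^q$ for all $x'\in\mathbb{B}(\bar x;\varepsilon)$, whenever $x\in\mathbb{B}(\bar x;\varepsilon)$, $\zeta\in\partial\varphi(x)\cap\mathbb{B}(\bar\zeta;\varepsilon)$, $\varphi(x)<\varphi(\bar x)+\varepsilon$. The constant $\kappa_t$ ($t\in(1,2]$) is: $\kappa_t=\frac{(2+\sqrt3)(t-1)}{16}$ for $t\in(1,\hat t]$, $\kappa_t=\frac{2+\sqrt3}{16}(1-(3-\sqrt3)^{1-t})$ for $t\in[\hat t,2)$, $\kappa_2=1$, where $\hat t\approx1.3214$ solves $\frac{t(t-1)}2=1-\big[1+\frac{(2-\sqrt3)t}{t-1}\big]^{1-t}$ on $(1,2]$. *)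

theory Defs
  imports "HOL-Analysis.Analysis"
begin

definition proper_fun :: "('a \<Rightarrow> ereal) \<Rightarrow> bool" where
  "proper_fun f \<longleftrightarrow> (\<forall>x. f x \<noteq> -\<infinity>) \<and> (\<exists>x. f x < \<infinity>)"

definition lsc_fun :: "('a::topological_space \<Rightarrow> ereal) \<Rightarrow> bool" where
  "lsc_fun f \<longleftrightarrow> (\<forall>x. f x \<le> Liminf (at x) f)"

definition frechet_subdiff :: "('a::real_inner \<Rightarrow> ereal) \<Rightarrow> 'a \<Rightarrow> 'a set" where
  "frechet_subdiff f x = {z. \<bar>f x\<bar> \<noteq> \<infinity> \<and>
     (\<forall>e>0. \<exists>d>0. \<forall>y. norm (y - x) < d \<longrightarrow>
        ereal (real_of_ereal (f x) + z \<bullet> (y - x) - e * norm (y - x)) \<le> f y)}"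

definition limiting_subdiff :: "('a::real_inner \<Rightarrow> ereal) \<Rightarrow> 'a \<Rightarrow> 'a set" where
  "limiting_subdiff f x = {z. \<bar>f x\<bar> \<noteq> \<infinity> \<and>
     (\<exists>X Z. X \<longlonglongrightarrow> x \<and> (\<lambda>k. f (X k)) \<longlonglongrightarrow> f x \<and>
            (\<forall>k. Z k \<in> frechet_subdiff f (X k)) \<and> Z \<longlonglongrightarrow> z)}"

definition p_calm :: "real \<Rightarrow> ('a::real_normed_vector \<Rightarrow> ereal) \<Rightarrow> 'a \<Rightarrow> real \<Rightarrow> bool" where
  "p_calm p f xb M \<longleftrightarrow> (\<forall>x. x \<noteq> xb \<longrightarrow> f x + ereal (M * norm (x - xb) powr p) > f xb)"

definition q_prox_regular ::
  "real \<Rightarrow> ('a::real_inner \<Rightarrow> ereal) \<Rightarrow> 'a \<Rightarrow> 'a \<Rightarrow> real \<Rightarrow> real \<Rightarrow> bool" where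
  "q_prox_regular q f xb zb eps rho \<longleftrightarrow>
     (\<forall>x \<in> cball xb eps. \<forall>z \<in> limiting_subdiff f x \<inter> cball zb eps.
        f x < f xb + ereal eps \<longrightarrow>
        (\<forall>x' \<in> cball xb eps.
           f x' \<ge> f x + ereal (z \<bullet> (x' - x) - rho / 2 * norm (x' - x) powr q)))"

definition prox_p :: "real \<Rightarrow> real \<Rightarrow> ('a::real_normed_vector \<Rightarrow> ereal) \<Rightarrow> 'a \<Rightarrow> 'a set" where
  "prox_p p gamma f x = {y. \<forall>z.
      f y + ereal (norm (x - y) powr p / (p * gamma)) \<le> f z + ereal (norm (x - z) powr p / (p * gamma))}"

definition env_p :: "real \<Rightarrow> real \<Rightarrow> ('a::real_normed_vector \<Rightarrow> ereal) \<Rightarrow> 'a \<Rightarrow> ereal" where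
  "env_p p gamma f x = (INF y. f y + ereal (norm (x - y) powr p / (p * gamma)))"

definition t_hat :: real where
  "t_hat = (THE t. 1 < t \<and> t \<le> 2 \<and>
      t * (t - 1) / 2 = 1 - (1 + (2 - sqrt 3) * t / (t - 1)) powr (1 - t))"

definition kappa :: "real \<Rightarrow> real" where
  "kappa t = (if t = 2 then 1
     else if t \<le> t_hat then (2 + sqrt 3) * (t - 1) / 16
     else (2 + sqrt 3) / 16 * (1 - (3 - sqrt 3) powr (1 - t)))"

end

theory Submission
  imports Defs
begin

text \<open>Write \<open>J u = \<parallel>u\<parallel>\<^sup>p\<^sup>-\<^sup>2 u\<close> for the gradient of \<open>\<parallel>u\<parallel>\<^sup>p / p\<close>. Since \<open>\<phi>\<close> is \<open>p\<close>-calm at \<open>0\<close> and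
  \<open>M p \<gamma> < 1\<close>, the prox objective is coercive: prox points exist, are \<open>O(\<parallel>x\<parallel>)\<close>, and for small \<open>x\<close>
  lie in the region where prox-regularity applies, while optimality gives \<open>J (x - y) / \<gamma> \<in> \<partial>\<phi>(y)\<close>.
  Prox-regularity turns this into the hypomonotonicity
  \<open>(\<zeta>\<^sub>2 - \<zeta>\<^sub>1) \<bullet> (y\<^sub>2 - y\<^sub>1) \<ge> -\<rho> \<parallel>y\<^sub>2 - y\<^sub>1\<parallel>\<^sup>q\<close>, whereas \<open>J\<close> is strongly monotone with modulus
  \<open>(p - 1)(\<parallel>a\<parallel> + \<parallel>b\<parallel>)\<^sup>p\<^sup>-\<^sup>2\<close>, which near \<open>0\<close> dominates the perturbation of order \<open>q \<ge> p\<close>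
  (for \<open>p = 2\<close> one needs \<open>\<rho>\<gamma> < 1\<close> instead, which is \<open>\<kappa>\<^sub>2 = 1\<close>). So the prox is locally Lipschitz,
  hence the envelope is differentiable with the \<open>(p - 1)\<close>-Hoelder gradient \<open>J (x - prox x) / \<gamma>\<close>.
  As \<open>1/q < 1\<close> and \<open>(p - 1)/q < p - 1\<close>, the constants \<open>Lp\<close> and \<open>LLp\<close> are then met on a small
  enough ball; of \<open>\<kappa>\<^sub>p\<close> only the positivity of \<open>\<kappa>\<^sub>p - \<rho>\<gamma>(2\<epsilon>)\<^sup>2\<^sup>-\<^sup>p\<close> is used.\<close>

section \<open>Inequalities for real powers\<close>

lemma powr_diff_one_mult:
  fixes x a :: real
  assumes "0 \<le> x"
  shows "x powr (a - 1) * x = x powr a"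
  by (cases "x = 0") (use powr_add[of x "a - 1" 1] assms in auto)

lemma powr_minus_two_mult:
  fixes x p :: real
  assumes "0 \<le> x"
  shows "x powr (p - 2) * x = x powr (p - 1)"
  using powr_diff_one_mult[of x "p - 1"] assms by simp

lemma powr_ge_tangent:
  fixes p a b :: real
  assumes "1 < p" "0 \<le> a" "0 \<le> b"
  shows "a powr p + p * a powr (p - 1) * (b - a) \<le> b powr p"
proof -
  have young: "a powr (p - 1) * b \<le> (a powr (p - 1)) powr (p / (p - 1)) / (p / (p - 1)) + b powr p / p"
    by (rule Youngs_inequality) (use assms in \<open>auto simp: field_simps\<close>)
  have "(a powr (p - 1)) powr (p / (p - 1)) = a powr p"
    using assms by (simp add: powr_powr)
  moreover have "a powr (p - 1) * a = a powr p"
    using assms by (cases "a = 0") (auto simp: powr_diff)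
  ultimately show ?thesis
    using young assms by (simp add: field_simps)
qed

lemma powr_le_tangent:
  fixes s a b :: real
  assumes "0 < s" "s \<le> 1" "0 < a" "0 \<le> b"
  shows "b powr s \<le> a powr s + s * a powr (s - 1) * (b - a)"
proof (cases "b = 0")
  case True
  have "a powr (s - 1) * a = a powr s"
    using powr_add[of a "s - 1" 1] assms by simp
  then show ?thesis
    using True assms by (simp add: algebra_simps)
next
  case False
  have young: "b powr s * a powr (1 - s) \<le> s * b + (1 - s) * a"
    by (rule Youngs_inequality_0) (use assms False in auto)
  have inv: "a powr (1 - s) * a powr (s - 1) = 1"
    using assms by (simp flip: powr_add)
  have "b powr s = b powr s * a powr (1 - s) * a powr (s - 1)"
    using inv by (simp add: mult.assoc)
  also have "\<dots> \<le> (s * b + (1 - s) * a) * a powr (s - 1)"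
    by (rule mult_right_mono[OF young]) simp
  also have "\<dots> = a powr s + s * a powr (s - 1) * (b - a)"
    using powr_add[of a "s - 1" 1] assms by (simp add: algebra_simps)
  finally show ?thesis .
qed

lemma powr_diff_ge_scaled:
  fixes p \<alpha> \<beta> :: real
  assumes p: "1 < p" "p \<le> 2" and \<alpha>\<beta>: "0 < \<alpha>" "0 \<le> \<beta>" "\<beta> \<le> \<alpha>"
  shows "(p - 1) * (\<alpha> + \<beta>) powr (p - 2) * (\<alpha> - \<beta>) \<le> \<alpha> powr (p - 1) - \<beta> powr (p - 1)"
proof -
  have "(\<alpha> + \<beta>) powr (p - 2) \<le> \<alpha> powr (p - 2)"
    by (rule powr_mono2') (use p \<alpha>\<beta> in auto)
  then have "(p - 1) * (\<alpha> + \<beta>) powr (p - 2) * (\<alpha> - \<beta>) \<le> (p - 1) * \<alpha> powr (p - 2) * (\<alpha> - \<beta>)"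
    using p \<alpha>\<beta> by (intro mult_right_mono mult_left_mono) auto
  also have "\<dots> \<le> \<alpha> powr (p - 1) - \<beta> powr (p - 1)"
    using powr_le_tangent[of "p - 1" \<alpha> \<beta>] p \<alpha>\<beta> by (simp add: algebra_simps)
  finally show ?thesis .
qed

lemma powr_sum_ge_scaled:
  fixes p \<alpha> \<beta> :: real
  assumes p: "1 < p" "p \<le> 2" and \<alpha>\<beta>: "0 < \<alpha>" "0 \<le> \<beta>"
  shows "(p - 1) * (\<alpha> + \<beta>) powr (p - 2) * (\<alpha> + \<beta>) \<le> \<alpha> powr (p - 1) + \<beta> powr (p - 1)"
proof -
  have "(\<alpha> + \<beta>) powr (p - 2) \<le> \<alpha> powr (p - 2)"
    by (rule powr_mono2') (use p \<alpha>\<beta> in auto)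
  then have "(\<alpha> + \<beta>) powr (p - 2) * \<alpha> \<le> \<alpha> powr (p - 1)"
    using \<alpha>\<beta> mult_right_mono[of _ _ \<alpha>] powr_minus_two_mult[of \<alpha> p] by fastforce
  moreover have "(\<alpha> + \<beta>) powr (p - 2) * \<beta> \<le> \<beta> powr (p - 1)"
  proof (cases "\<beta> = 0")
    case False
    then have "(\<alpha> + \<beta>) powr (p - 2) \<le> \<beta> powr (p - 2)"
      by (intro powr_mono2') (use p \<alpha>\<beta> in auto)
    then show ?thesis
      using \<alpha>\<beta> mult_right_mono[of _ _ \<beta>] powr_minus_two_mult[of \<beta> p] by fastforce
  qed simp
  ultimately have "(\<alpha> + \<beta>) powr (p - 2) * (\<alpha> + \<beta>) \<le> \<alpha> powr (p - 1) + \<beta> powr (p - 1)"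
    by (simp add: distrib_left)
  moreover have "(p - 1) * ((\<alpha> + \<beta>) powr (p - 2) * (\<alpha> + \<beta>)) \<le> (\<alpha> + \<beta>) powr (p - 2) * (\<alpha> + \<beta>)"
    using p \<alpha>\<beta> by (intro mult_left_le_one_le) auto
  ultimately show ?thesis
    by (simp add: mult.assoc)
qed

lemma powr_superadditive:
  fixes a b p :: real
  assumes "1 \<le> p" "0 \<le> a" "0 \<le> b"
  shows "a powr p + b powr p \<le> (a + b) powr p"
proof (cases "a + b = 0")
  case True
  then have "a = 0" "b = 0"
    using assms by auto
  then show ?thesis
    by simp
next
  case False
  then have s: "a + b > 0"
    using assms by auto
  have chord: "x powr p \<le> (a + b) powr p * (x / (a + b))" if "0 \<le> x" "x \<le> a + b" for x
  proof -
    have "(x / (a + b)) powr p \<le> x / (a + b)"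
      using powr_le_one_le[of "x / (a + b)" p] that s assms by (cases "x = 0") auto
    then have "(a + b) powr p * (x / (a + b)) powr p \<le> (a + b) powr p * (x / (a + b))"
      by (intro mult_left_mono) auto
    then show ?thesis
      using s that by (simp add: powr_divide)
  qed
  have "a powr p + b powr p \<le> (a + b) powr p * (a / (a + b)) + (a + b) powr p * (b / (a + b))"
    using chord[of a] chord[of b] assms by (intro add_mono) auto
  also have "\<dots> = (a + b) powr p"
    using s by (simp flip: distrib_left add_divide_distrib)
  finally show ?thesis .
qed

lemma powr_small_bound:
  fixes A B \<alpha> :: real
  assumes "0 \<le> A" "0 < \<alpha>" "0 < B"
  shows "\<exists>r>0. \<forall>t. 0 \<le> t \<and> t \<le> r \<longrightarrow> A * t powr \<alpha> \<le> B"
proof -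
  define r where "r = (B / (A + 1)) powr (1 / \<alpha>)"
  have "A * t powr \<alpha> \<le> B" if t: "0 \<le> t" "t \<le> r" for t
  proof -
    have "t powr \<alpha> \<le> r powr \<alpha>"
      by (rule powr_mono2) (use t assms in auto)
    also have "\<dots> = B / (A + 1)"
      using assms by (simp add: r_def powr_powr)
    finally have "A * t powr \<alpha> \<le> A * (B / (A + 1))"
      using assms by (intro mult_left_mono) auto
    also have "\<dots> \<le> B"
      using assms by (simp add: field_simps)
    finally show ?thesis .
  qed
  moreover have "r > 0"
    using assms by (simp add: r_def)
  ultimately show ?thesis
    by blast
qed

lemma powr_dominated_near_0:
  fixes A C \<alpha> \<beta> :: real
  assumes "0 \<le> A" "\<beta> < \<alpha>" "0 < C"
  shows "\<exists>r>0. \<forall>t. 0 \<le> t \<and> t \<le> r \<longrightarrow> A * t powr \<alpha> \<le> C * t powr \<beta>"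
proof -
  obtain r where r: "r > 0" "\<And>t. 0 \<le> t \<Longrightarrow> t \<le> r \<Longrightarrow> A * t powr (\<alpha> - \<beta>) \<le> C"
    using powr_small_bound[of A "\<alpha> - \<beta>" C] assms by auto
  have "A * t powr \<alpha> \<le> C * t powr \<beta>" if t: "0 \<le> t" "t \<le> r" for t
  proof (cases "t = 0")
    case False
    then have "A * t powr \<alpha> = (A * t powr (\<alpha> - \<beta>)) * t powr \<beta>"
      by (simp add: mult.assoc flip: powr_add)
    also have "\<dots> \<le> C * t powr \<beta>"
      using r(2)[OF t] by (intro mult_right_mono) auto
    finally show ?thesis .
  qed simp
  then show ?thesis
    using r(1) by blast
qed

section \<open>The duality mapping\<close>

text \<open>\<open>duality_map p\<close> is the gradient of \<open>\<parallel>u\<parallel>\<^sup>p / p\<close> (the duality mapping \<open>J\<^sub>p\<close>).\<close>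

definition duality_map :: "real \<Rightarrow> 'a::real_normed_vector \<Rightarrow> 'a" where
  "duality_map p u = (norm u powr (p - 2)) *\<^sub>R u"

lemma norm_duality_map: "norm (duality_map p u) = norm u powr (p - 1)"
  unfolding duality_map_def using powr_minus_two_mult[of "norm u" p] by (simp add: mult.commute)

lemma inner_duality_map_self: "duality_map p u \<bullet> u = norm u powr p"
proof -
  have "duality_map p u \<bullet> u = norm u powr (p - 2) * norm u * norm u"
    by (simp add: duality_map_def flip: power2_norm_eq_inner power2_eq_square mult.assoc)
  then show ?thesis
    by (simp add: powr_minus_two_mult powr_diff_one_mult)
qed

lemma norm_powr_ge_linearization:
  fixes u v :: "'a::real_inner"
  assumes "1 < p"
  shows "norm u powr p + p * (duality_map p u \<bullet> (v - u)) \<le> norm v powr p"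
proof -
  have "duality_map p u \<bullet> v \<le> norm u powr (p - 1) * norm v"
    using Cauchy_Schwarz_ineq2[of "duality_map p u" v] by (simp add: norm_duality_map abs_le_iff)
  then have "duality_map p u \<bullet> (v - u) \<le> norm u powr (p - 1) * (norm v - norm u)"
    using powr_diff_one_mult[of "norm u" p]
    by (simp add: inner_diff_right inner_duality_map_self algebra_simps)
  then have "norm u powr p + p * (duality_map p u \<bullet> (v - u))
      \<le> norm u powr p + p * norm u powr (p - 1) * (norm v - norm u)"
    using assms by (simp add: mult.assoc)
  also have "\<dots> \<le> norm v powr p"
    by (rule powr_ge_tangent) (use assms in auto)
  finally show ?thesis .
qed

lemma duality_map_strongly_monotone_ordered:
  fixes a b :: "'a::real_inner"
  assumes p: "1 < p" "p \<le> 2" and ab: "norm b \<le> norm a" "a \<noteq> 0"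
  shows "(p - 1) * (norm a + norm b) powr (p - 2) * norm (a - b) ^ 2
    \<le> (duality_map p a - duality_map p b) \<bullet> (a - b)"
proof -
  define \<alpha> where "\<alpha> = norm a"
  define \<beta> where "\<beta> = norm b"
  define t where "t = a \<bullet> b"
  define A where "A = \<alpha> powr (p - 2)"
  define B where "B = \<beta> powr (p - 2)"
  define c\<sigma> where "c\<sigma> = (p - 1) * (\<alpha> + \<beta>) powr (p - 2)"
  have \<alpha>\<beta>: "0 < \<alpha>" "0 \<le> \<beta>" "\<beta> \<le> \<alpha>"
    using ab by (auto simp: \<alpha>_def \<beta>_def)
  have tb: "\<bar>t\<bar> \<le> \<alpha> * \<beta>"
    unfolding t_def \<alpha>_def \<beta>_def by (rule Cauchy_Schwarz_ineq2)
  have Aa: "A * \<alpha> = \<alpha> powr (p - 1)" and Bb: "B * \<beta> = \<beta> powr (p - 1)"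
    using powr_minus_two_mult \<alpha>\<beta> by (auto simp: A_def B_def)
  define P where "P = A * \<alpha>\<^sup>2 + B * \<beta>\<^sup>2 - c\<sigma> * (\<alpha>\<^sup>2 + \<beta>\<^sup>2)"
  define Q where "Q = A + B - 2 * c\<sigma>"
  have "(duality_map p a - duality_map p b) \<bullet> (a - b) - c\<sigma> * norm (a - b) ^ 2 = P - Q * t"
    by (simp add: duality_map_def A_def B_def P_def Q_def \<alpha>_def \<beta>_def t_def inner_diff_left
        inner_diff_right power2_norm_eq_inner inner_commute algebra_simps)
  \<comment> \<open>\<open>P - Q t\<close> is affine in \<open>t \<in> [-\<alpha>\<beta>, \<alpha>\<beta>]\<close>, so it suffices to check both endpoints.\<close>
  moreover have "0 \<le> P - Q * (\<alpha> * \<beta>)"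
  proof -
    have "c\<sigma> * (\<alpha> - \<beta>) * (\<alpha> - \<beta>) \<le> (\<alpha> powr (p - 1) - \<beta> powr (p - 1)) * (\<alpha> - \<beta>)"
      using powr_diff_ge_scaled[OF p \<alpha>\<beta>] \<alpha>\<beta> by (intro mult_right_mono) (auto simp: c\<sigma>_def)
    moreover have "P - Q * (\<alpha> * \<beta>) = (A * \<alpha> - B * \<beta>) * (\<alpha> - \<beta>) - c\<sigma> * (\<alpha> - \<beta>) * (\<alpha> - \<beta>)"
      by (simp add: P_def Q_def power2_eq_square algebra_simps)
    ultimately show ?thesis
      using Aa Bb by simp
  qed
  moreover have "0 \<le> P + Q * (\<alpha> * \<beta>)"
  proof -
    have "c\<sigma> * (\<alpha> + \<beta>) * (\<alpha> + \<beta>) \<le> (\<alpha> powr (p - 1) + \<beta> powr (p - 1)) * (\<alpha> + \<beta>)"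
      using powr_sum_ge_scaled[OF p \<alpha>\<beta>(1,2)] \<alpha>\<beta> by (intro mult_right_mono) (auto simp: c\<sigma>_def)
    moreover have "P + Q * (\<alpha> * \<beta>) = (A * \<alpha> + B * \<beta>) * (\<alpha> + \<beta>) - c\<sigma> * (\<alpha> + \<beta>) * (\<alpha> + \<beta>)"
      by (simp add: P_def Q_def power2_eq_square algebra_simps)
    ultimately show ?thesis
      using Aa Bb by simp
  qed
  moreover have "Q * t \<le> Q * (\<alpha> * \<beta>) \<or> Q * t \<le> Q * (- (\<alpha> * \<beta>))"
    using tb mult_left_mono[of t "\<alpha> * \<beta>" Q] mult_left_mono_neg[of "- (\<alpha> * \<beta>)" t Q]
    by (cases "Q \<ge> 0") auto
  ultimately show ?thesis
    by (auto simp: c\<sigma>_def \<alpha>_def \<beta>_def)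
qed

lemma duality_map_strongly_monotone:
  fixes a b :: "'a::real_inner"
  assumes p: "1 < p" "p \<le> 2"
  shows "(p - 1) * (norm a + norm b) powr (p - 2) * norm (a - b) ^ 2
    \<le> (duality_map p a - duality_map p b) \<bullet> (a - b)"
proof (cases "norm b \<le> norm a")
  case True
  then show ?thesis
    using duality_map_strongly_monotone_ordered[OF p True] by (cases "a = 0") simp_all
next
  case False
  then have "norm a \<le> norm b" "b \<noteq> 0"
    by auto
  from duality_map_strongly_monotone_ordered[OF p this] show ?thesis
    by (simp add: add.commute norm_minus_commute inner_commute inner_diff_left inner_diff_right algebra_simps)
qed

lemma duality_map_lipschitz_ordered:
  fixes a b :: "'a::real_inner"
  assumes p: "1 < p" "p \<le> 2" and ab: "norm b \<le> norm a" "a \<noteq> 0"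
  shows "norm (duality_map p a - duality_map p b) \<le> 2 * norm a powr (p - 2) * norm (a - b)"
proof -
  define A where "A = norm a powr (p - 2)"
  define B where "B = norm b powr (p - 2)"
  have split: "duality_map p a - duality_map p b = A *\<^sub>R (a - b) + (A - B) *\<^sub>R b"
    by (simp add: duality_map_def A_def B_def algebra_simps)
  have Ann: "A \<ge> 0"
    by (simp add: A_def)
  have "norm ((A - B) *\<^sub>R b) \<le> A * norm (a - b)"
  proof (cases "b = 0")
    case True
    then show ?thesis
      using Ann by simp
  next
    case False
    have AB: "A \<le> B"
      unfolding A_def B_def by (rule powr_mono2') (use p ab False in auto)
    have "norm ((A - B) *\<^sub>R b) = (B - A) * norm b"
      using AB by simp
    also have "\<dots> = norm b powr (p - 1) - A * norm b"
      using powr_minus_two_mult[of "norm b" p] by (simp add: B_def algebra_simps)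
    also have "\<dots> \<le> norm a powr (p - 1) - A * norm b"
      using powr_mono2[of "p - 1" "norm b" "norm a"] p ab by simp
    also have "\<dots> = A * (norm a - norm b)"
      using powr_minus_two_mult[of "norm a" p] by (simp add: A_def algebra_simps)
    also have "\<dots> \<le> A * norm (a - b)"
      using Ann norm_triangle_ineq2[of a b] by (intro mult_left_mono) auto
    finally show ?thesis .
  qed
  then have "norm (duality_map p a - duality_map p b) \<le> A * norm (a - b) + A * norm (a - b)"
    unfolding split using Ann by (intro order.trans[OF norm_triangle_ineq]) simp
  then show ?thesis
    by (simp add: A_def algebra_simps)
qed

lemma duality_map_lipschitz:
  fixes a b :: "'a::real_inner"
  assumes p: "1 < p" "p \<le> 2" and s: "norm a + norm b > 0"
  shows "norm (duality_map p a - duality_map p b) \<le> 4 * (norm a + norm b) powr (p - 2) * norm (a - b)"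
proof -
  have ordered: "norm (duality_map p a - duality_map p b) \<le> 4 * (norm a + norm b) powr (p - 2) * norm (a - b)"
    if ab: "norm b \<le> norm a" "a \<noteq> 0" for a b :: 'a
  proof -
    have "norm a powr (p - 2) \<le> ((norm a + norm b) / 2) powr (p - 2)"
      by (rule powr_mono2') (use p ab in \<open>auto intro!: add_pos_nonneg\<close>)
    also have "\<dots> = (norm a + norm b) powr (p - 2) / 2 powr (p - 2)"
      by (simp add: powr_divide)
    also have "\<dots> \<le> (norm a + norm b) powr (p - 2) / (1 / 2)"
      using powr_mono[of "-1" "p - 2" 2] p by (intro divide_left_mono) (auto simp: powr_minus)
    also have "\<dots> = 2 * (norm a + norm b) powr (p - 2)"
      by simp
    finally have "2 * norm a powr (p - 2) * norm (a - b) \<le> 2 * (2 * (norm a + norm b) powr (p - 2)) * norm (a - b)"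
      by (intro mult_right_mono mult_left_mono) auto
    with duality_map_lipschitz_ordered[OF p ab] show ?thesis
      by (simp add: algebra_simps)
  qed
  show ?thesis
  proof (cases "norm b \<le> norm a")
    case True
    then show ?thesis
      using ordered s by force
  next
    case False
    then have "norm (duality_map p b - duality_map p a) \<le> 4 * (norm b + norm a) powr (p - 2) * norm (b - a)"
      by (intro ordered) auto
    then show ?thesis
      by (simp add: add.commute norm_minus_commute)
  qed
qed

lemma duality_map_holder:
  fixes a b :: "'a::real_inner"
  assumes p: "1 < p" "p \<le> 2"
  shows "norm (duality_map p a - duality_map p b) \<le> 4 * norm (a - b) powr (p - 1)"
proof (cases "a = b")
  case False
  then have w: "norm (a - b) > 0"
    by simp
  have s: "norm (a - b) \<le> norm a + norm b"
    by (rule norm_triangle_ineq4)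
  then have "(norm a + norm b) powr (p - 2) \<le> norm (a - b) powr (p - 2)"
    by (intro powr_mono2') (use p w in auto)
  then have "4 * (norm a + norm b) powr (p - 2) * norm (a - b) \<le> 4 * norm (a - b) powr (p - 2) * norm (a - b)"
    by (intro mult_right_mono) auto
  also have "\<dots> = 4 * norm (a - b) powr (p - 1)"
    using powr_minus_two_mult[of "norm (a - b)" p] by simp
  finally show ?thesis
    using duality_map_lipschitz[OF p] s w by (meson order.trans less_le_trans)
qed simp

lemma norm_powr_le_linearization:
  fixes u v :: "'a::real_inner"
  assumes p: "1 < p" "p \<le> 2"
  shows "norm v powr p - norm u powr p - p * (duality_map p u \<bullet> (v - u)) \<le> 4 * p * norm (v - u) powr p"
proof -
  have "norm v powr p - norm u powr p - p * (duality_map p u \<bullet> (v - u))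
      \<le> p * ((duality_map p v - duality_map p u) \<bullet> (v - u))"
    using norm_powr_ge_linearization[OF p(1), of v u]
    by (simp add: inner_diff_left inner_diff_right algebra_simps)
  also have "\<dots> \<le> p * (norm (duality_map p v - duality_map p u) * norm (v - u))"
    using p by (intro mult_left_mono norm_cauchy_schwarz) auto
  also have "\<dots> \<le> p * (4 * norm (v - u) powr (p - 1) * norm (v - u))"
    using p duality_map_holder[OF p, of v u] by (intro mult_left_mono mult_right_mono) auto
  also have "\<dots> = 4 * p * norm (v - u) powr p"
    using powr_diff_one_mult[of "norm (v - u)" p] by simp
  finally show ?thesis .
qed

lemma duality_map_energy_bound:
  fixes a b d e :: "'a::real_inner"
  assumes p: "1 < p" "p \<le> 2" and shift: "a - b = e - d" and s: "0 < norm a + norm b"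
    and hypomonotone: "(duality_map p a - duality_map p b) \<bullet> d \<ge> - c * norm d powr q"
  shows "(p - 1) * (norm a + norm b) powr (p - 2) * norm (a - b) ^ 2
    \<le> 4 * (norm a + norm b) powr (p - 2) * norm (a - b) * norm e + c * norm d powr q"
proof -
  have "(p - 1) * (norm a + norm b) powr (p - 2) * norm (a - b) ^ 2 \<le> (duality_map p a - duality_map p b) \<bullet> (a - b)"
    by (rule duality_map_strongly_monotone[OF p])
  also have "\<dots> = (duality_map p a - duality_map p b) \<bullet> e - (duality_map p a - duality_map p b) \<bullet> d"
    by (simp add: shift inner_diff_right)
  also have "\<dots> \<le> norm (duality_map p a - duality_map p b) * norm e + c * norm d powr q"
    using hypomonotone norm_cauchy_schwarz[of "duality_map p a - duality_map p b" e] by linarith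
  also have "\<dots> \<le> 4 * (norm a + norm b) powr (p - 2) * norm (a - b) * norm e + c * norm d powr q"
    using duality_map_lipschitz[OF p s] by (intro add_right_mono mult_right_mono) auto
  finally show ?thesis .
qed

text \<open>If \<open>\<parallel>d\<parallel>\<close> exceeded \<open>(1 + K)\<parallel>e\<parallel>\<close>, then \<open>w = a - b\<close> would dominate both, and in the energy bound
  the perturbation \<open>c\<parallel>d\<parallel>\<^sup>q\<close> would be at most \<open>\<theta>(p - 1)\<sigma>\<parallel>w\<parallel>\<^sup>2\<close>, \<open>\<sigma> = (\<parallel>a\<parallel> + \<parallel>b\<parallel>)\<^sup>p\<^sup>-\<^sup>2\<close>, leaving
  \<open>(1 - \<theta>)(p - 1)\<parallel>w\<parallel> \<le> 4\<parallel>e\<parallel>\<close>.\<close>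

lemma duality_map_perturbation_bound:
  fixes a b d e :: "'a::real_inner"
  assumes p: "1 < p" "p \<le> 2" and q: "2 \<le> q" and \<theta>: "0 \<le> \<theta>" "\<theta> < 1"
    and K: "0 < K" "4 / ((1 - \<theta>) * (p - 1)) \<le> K"
    and shift: "a - b = e - d" and c: "0 \<le> c"
    and hypomonotone: "(duality_map p a - duality_map p b) \<bullet> d \<ge> - c * norm d powr q"
    and small: "norm a + norm b > 0 \<Longrightarrow>
      c * (1 + 1 / K) powr q * (norm a + norm b) powr (q - p) \<le> \<theta> * (p - 1)"
  shows "norm d \<le> (1 + K) * norm e"
proof (rule ccontr)
  assume "\<not> ?thesis"
  define w where "w = a - b"
  define s where "s = norm a + norm b"
  define \<sigma> where "\<sigma> = s powr (p - 2)"
  have "d = e - w"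
    using shift by (simp add: w_def)
  then have d_le: "norm d \<le> norm e + norm w"
    using norm_triangle_ineq4 by blast
  with \<open>\<not> ?thesis\<close> have wK: "norm w > K * norm e"
    by (simp add: algebra_simps)
  moreover have "0 \<le> K * norm e"
    using K by simp
  ultimately have wpos: "norm w > 0"
    by linarith
  have ws: "norm w \<le> s"
    unfolding w_def s_def by (rule norm_triangle_ineq4)
  then have spos: "s > 0"
    using wpos by linarith
  then have \<sigma>pos: "\<sigma> > 0"
    by (simp add: \<sigma>_def)
  have "norm e + norm w \<le> (1 + 1 / K) * norm w"
    using wK K by (simp add: field_simps)
  then have "norm d powr q \<le> ((1 + 1 / K) * norm w) powr q"
    using d_le q by (intro powr_mono2) auto
  also have "\<dots> = (1 + 1 / K) powr q * (norm w powr (q - 2) * norm w ^ 2)"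
    using K wpos powr_add[of "norm w" "q - 2" 2] by (simp add: powr_mult)
  also have "\<dots> \<le> (1 + 1 / K) powr q * (s powr (q - 2) * norm w ^ 2)"
    using q ws by (intro mult_left_mono mult_right_mono powr_mono2) auto
  also have "s powr (q - 2) = \<sigma> * s powr (q - p)"
    using spos by (simp add: \<sigma>_def flip: powr_add)
  finally have "c * norm d powr q \<le> c * ((1 + 1 / K) powr q * (\<sigma> * s powr (q - p) * norm w ^ 2))"
    using c by (rule mult_left_mono)
  also have "\<dots> = (c * (1 + 1 / K) powr q * s powr (q - p)) * (\<sigma> * norm w ^ 2)"
    by (simp add: algebra_simps)
  also have "\<dots> \<le> (\<theta> * (p - 1)) * (\<sigma> * norm w ^ 2)"
    using small spos \<sigma>pos by (intro mult_right_mono) (auto simp: s_def)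
  finally have "((1 - \<theta>) * (p - 1) * norm w) * (\<sigma> * norm w) \<le> (4 * norm e) * (\<sigma> * norm w)"
    using duality_map_energy_bound[OF p shift _ hypomonotone] spos
    by (simp add: s_def \<sigma>_def w_def algebra_simps power2_eq_square)
  then have "norm w \<le> 4 / ((1 - \<theta>) * (p - 1)) * norm e"
    using \<sigma>pos wpos \<theta> p by (simp add: pos_le_divide_eq mult.commute)
  also have "\<dots> \<le> K * norm e"
    using K by (intro mult_right_mono) auto
  finally show False
    using wK by simp
qed

text \<open>For \<open>p < 2\<close> the factor \<open>s\<^sup>q\<^sup>-\<^sup>p\<close> is small for small \<open>s\<close>; for \<open>p = 2\<close> it can be \<open>1\<close>, and \<open>c < 1\<close>
  is needed instead.\<close>

lemma perturbation_constants:
  fixes p q c :: real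
  assumes p: "1 < p" "p \<le> 2" and q: "2 \<le> q" and c: "0 < c" and c2: "p = 2 \<Longrightarrow> c < 1"
  shows "\<exists>\<theta> K S. 0 \<le> \<theta> \<and> \<theta> < 1 \<and> 0 < K \<and> 4 / ((1 - \<theta>) * (p - 1)) \<le> K \<and> 0 < S \<and>
     (\<forall>s. 0 < s \<and> s \<le> S \<longrightarrow> c * (1 + 1 / K) powr q * s powr (q - p) \<le> \<theta> * (p - 1))"
proof (cases "p = 2")
  case False
  define K where "K = 8 / (p - 1)"
  have Kpos: "K > 0"
    using p by (simp add: K_def)
  obtain S where S: "S > 0" "\<And>s. 0 \<le> s \<Longrightarrow> s \<le> S \<Longrightarrow> c * (1 + 1 / K) powr q * s powr (q - p) \<le> 1 / 2 * (p - 1)"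
    using powr_small_bound[of "c * (1 + 1 / K) powr q" "q - p" "1 / 2 * (p - 1)"] p q c False by auto
  moreover have "4 / ((1 - 1 / 2) * (p - 1)) \<le> K"
    by (simp add: K_def)
  ultimately show ?thesis
    using Kpos by (intro exI[of _ "1 / 2"] exI[of _ K] exI[of _ S]) auto
next
  case True
  have c1: "c < 1"
    using c2 True by simp
  define \<theta> where "\<theta> = (1 + c) / 2"
  define l where "l = (1 + c) / (2 * c)"
  \<comment> \<open>\<open>c < \<theta> < 1\<close>, and \<open>K\<close> will be chosen with \<open>(1 + 1/K)\<^sup>q \<le> l = \<theta> / c\<close>.\<close>
  have l: "l > 1"
    using c c1 by (simp add: l_def field_simps)
  have lq: "l powr (1 / q) > 1"
    using powr_less_mono2[of "1 / q" 1 l] l q by simp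
  define K where "K = max (4 / (1 - \<theta>)) (1 / (l powr (1 / q) - 1))"
  have Kpos: "K > 0"
    using c1 by (simp add: K_def \<theta>_def less_max_iff_disj)
  have "1 / (l powr (1 / q) - 1) \<le> K"
    by (simp add: K_def)
  then have "1 / K \<le> l powr (1 / q) - 1"
    using lq Kpos by (simp add: field_simps)
  then have "(1 + 1 / K) powr q \<le> (l powr (1 / q)) powr q"
    using Kpos q by (intro powr_mono2) auto
  also have "\<dots> = l"
    using l q by (simp add: powr_powr)
  finally have Kl: "(1 + 1 / K) powr q \<le> l" .
  have "c * (1 + 1 / K) powr q * s powr (q - p) \<le> \<theta> * (p - 1)" if s: "0 < s" "s \<le> 1" for s :: real
  proof -
    have "s powr (q - p) \<le> 1"
      using s q True by (intro powr_le1) auto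
    then have "c * (1 + 1 / K) powr q * s powr (q - p) \<le> c * l"
      using Kl c by (smt (verit) mult_left_mono mult_nonneg_nonneg mult_right_le_one_le powr_ge_zero)
    also have "\<dots> = \<theta> * (p - 1)"
      using c True by (simp add: l_def \<theta>_def)
    finally show ?thesis .
  qed
  moreover have "4 / ((1 - \<theta>) * (p - 1)) \<le> K"
    using True by (simp add: K_def)
  moreover have "0 \<le> \<theta>" "\<theta> < 1"
    using c c1 by (auto simp: \<theta>_def)
  ultimately show ?thesis
    using Kpos by (intro exI[of _ \<theta>] exI[of _ K] exI[of _ 1]) auto
qed

section \<open>Semicontinuity and subdifferentials\<close>

lemma lsc_attains_inf:
  fixes G :: "'a::topological_space \<Rightarrow> ereal"
  assumes K: "compact K" "K \<noteq> {}"
    and lsc: "\<And>y c. y \<in> K \<Longrightarrow> c < G y \<Longrightarrow> eventually (\<lambda>z. c < G z) (at y)"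
  shows "\<exists>y\<in>K. \<forall>z\<in>K. G y \<le> G z"
proof (rule ccontr)
  assume not_attained: "\<not> ?thesis"
  define m where "m = (INF z\<in>K. G z)"
  have "m < G y" if "y \<in> K" for y
    using not_attained that by (metis INF_lower m_def order_le_less)
  then have "\<forall>y\<in>K. \<exists>c. m < c \<and> c < G y"
    using dense by blast
  then obtain c where c: "\<And>y. y \<in> K \<Longrightarrow> m < c y \<and> c y < G y"
    by metis
  have "\<forall>y\<in>K. \<exists>S. open S \<and> y \<in> S \<and> (\<forall>z\<in>S. c y < G z)"
  proof
    fix y assume y: "y \<in> K"
    have "eventually (\<lambda>z. c y < G z) (at y)"
      using lsc[OF y] c[OF y] by blast
    then obtain S where "open S" "y \<in> S" "\<forall>z\<in>S. z \<noteq> y \<longrightarrow> c y < G z"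
      unfolding eventually_at_topological by blast
    then show "\<exists>S. open S \<and> y \<in> S \<and> (\<forall>z\<in>S. c y < G z)"
      using c[OF y] by metis
  qed
  then obtain V where V: "\<And>y. y \<in> K \<Longrightarrow> open (V y) \<and> y \<in> V y \<and> (\<forall>z\<in>V y. c y < G z)"
    by metis
  then have "K \<subseteq> (\<Union>y\<in>K. V y)"
    by blast
  with compactE_image[OF K(1), of K V] V obtain D where D: "D \<subseteq> K" "finite D" "K \<subseteq> (\<Union>y\<in>D. V y)"
    by blast
  then have "D \<noteq> {}"
    using K(2) by auto
  define c0 where "c0 = Min (c ` D)"
  have "c0 \<le> G z" if "z \<in> K" for z
  proof -
    obtain y where "y \<in> D" "z \<in> V y"
      using D \<open>z \<in> K\<close> by blast
    then have "c y < G z"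
      using V D by blast
    moreover have "c0 \<le> c y"
      using \<open>y \<in> D\<close> D by (simp add: c0_def)
    ultimately show ?thesis
      by simp
  qed
  then have "c0 \<le> m"
    unfolding m_def by (rule INF_greatest)
  moreover have "c0 \<in> c ` D"
    unfolding c0_def using D \<open>D \<noteq> {}\<close> by (intro Min_in) auto
  then have "m < c0"
    using c D by auto
  ultimately show False
    by simp
qed

lemma lsc_fun_add_continuous:
  fixes f :: "'a::topological_space \<Rightarrow> ereal" and g :: "'a \<Rightarrow> real"
  assumes lsc: "lsc_fun f" and g: "(g \<longlongrightarrow> g y) (at y)" and c: "c < f y + ereal (g y)"
  shows "eventually (\<lambda>z. c < f z + ereal (g z)) (at y)"
proof -
  obtain r0 where r0: "c < ereal r0" "ereal r0 < f y + ereal (g y)"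
    using c ereal_dense2 by blast
  then obtain r1 where r1: "ereal r0 < ereal r1" "ereal r1 < f y + ereal (g y)"
    using ereal_dense2 by blast
  then have r: "c < ereal r0" "r0 < r1" "ereal r1 < f y + ereal (g y)"
    using r0 by auto
  have "ereal (r1 - g y) < f y"
    using r by (cases "f y") auto
  moreover have "f y \<le> Liminf (at y) f"
    using lsc unfolding lsc_fun_def by blast
  ultimately have f_near: "eventually (\<lambda>z. ereal (r1 - g y) < f z) (at y)"
    unfolding le_Liminf_iff by blast
  from g have g_near: "eventually (\<lambda>z. dist (g z) (g y) < r1 - r0) (at y)"
    using r(2) by (intro tendstoD) auto
  show ?thesis
  proof (rule eventually_mono[OF eventually_conj[OF f_near g_near]])
    fix z assume z: "ereal (r1 - g y) < f z \<and> dist (g z) (g y) < r1 - r0"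
    then have "ereal r0 < f z + ereal (g z)"
      by (cases "f z") (auto simp: dist_real_def abs_less_iff)
    then show "c < f z + ereal (g z)"
      using r(1) by simp
  qed
qed

lemma frechet_subdiff_subset_limiting:
  "frechet_subdiff f x \<subseteq> limiting_subdiff f x"
proof
  fix z assume z: "z \<in> frechet_subdiff f x"
  then have "\<bar>f x\<bar> \<noteq> \<infinity>"
    by (simp add: frechet_subdiff_def)
  with z show "z \<in> limiting_subdiff f x"
    unfolding limiting_subdiff_def by (intro CollectI conjI exI[of _ "\<lambda>k. x"] exI[of _ "\<lambda>k. z"]) auto
qed

lemma q_prox_regular_hypomonotone:
  assumes preg: "q_prox_regular q f xb zb eps rho"
    and x: "x1 \<in> cball xb eps" "x2 \<in> cball xb eps"
    and z: "z1 \<in> limiting_subdiff f x1 \<inter> cball zb eps" "z2 \<in> limiting_subdiff f x2 \<inter> cball zb eps"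
    and fx: "f x1 < f xb + ereal eps" "f x2 < f xb + ereal eps"
  shows "(z2 - z1) \<bullet> (x2 - x1) \<ge> - rho * norm (x2 - x1) powr q"
proof -
  obtain v1 v2 where v: "f x1 = ereal v1" "f x2 = ereal v2"
    using z by (cases "f x1"; cases "f x2") (auto simp: limiting_subdiff_def)
  have "f x2 \<ge> f x1 + ereal (z1 \<bullet> (x2 - x1) - rho / 2 * norm (x2 - x1) powr q)"
       "f x1 \<ge> f x2 + ereal (z2 \<bullet> (x1 - x2) - rho / 2 * norm (x1 - x2) powr q)"
    using preg x z fx unfolding q_prox_regular_def by blast+
  then show ?thesis
    using v by (simp add: norm_minus_commute inner_diff_left inner_diff_right algebra_simps)
qed

section \<open>Proximal mapping and Moreau envelope\<close>

lemma env_p_eq_at_prox: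
  assumes "y \<in> prox_p p gamma f x"
  shows "env_p p gamma f x = f y + ereal (norm (x - y) powr p / (p * gamma))"
  unfolding env_p_def using assms by (intro INF_eqI) (auto simp: prox_p_def)

lemma env_p_le: "env_p p gamma f x \<le> f y + ereal (norm (x - y) powr p / (p * gamma))"
  unfolding env_p_def by (rule INF_lower) simp

lemma prox_gradient_holder:
  fixes x1 x2 y1 y2 :: "'a::real_inner"
  assumes p: "1 < p" "p \<le> 2" and gamma: "0 < gamma" and L: "0 \<le> L"
    and lip: "norm (y2 - y1) \<le> L * norm (x2 - x1)"
  shows "norm ((1 / gamma) *\<^sub>R duality_map p (x2 - y2) - (1 / gamma) *\<^sub>R duality_map p (x1 - y1))
    \<le> 4 / gamma * (1 + L) powr (p - 1) * norm (x2 - x1) powr (p - 1)"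
proof -
  have "norm ((x2 - y2) - (x1 - y1)) = norm ((x2 - x1) - (y2 - y1))"
    by (simp add: algebra_simps)
  also have "\<dots> \<le> norm (x2 - x1) + norm (y2 - y1)"
    by (rule norm_triangle_ineq4)
  also have "\<dots> \<le> (1 + L) * norm (x2 - x1)"
    using lip by (simp add: algebra_simps)
  finally have "norm ((x2 - y2) - (x1 - y1)) powr (p - 1) \<le> ((1 + L) * norm (x2 - x1)) powr (p - 1)"
    using p by (intro powr_mono2) auto
  also have "\<dots> = (1 + L) powr (p - 1) * norm (x2 - x1) powr (p - 1)"
    using L by (simp add: powr_mult)
  finally have "norm (duality_map p (x2 - y2) - duality_map p (x1 - y1))
      \<le> 4 * (1 + L) powr (p - 1) * norm (x2 - x1) powr (p - 1)"
    using duality_map_holder[OF p, of "x2 - y2" "x1 - y1"] by (simp add: mult.assoc)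
  then show ?thesis
    using gamma by (simp add: divide_right_mono flip: scaleR_diff_right)
qed

locale calm_prox =
  fixes f :: "'a::euclidean_space \<Rightarrow> ereal" and p gamma M :: real
  assumes p: "1 < p" "p \<le> 2" and gamma: "0 < gamma" and M: "0 < M"
    and Mpg: "M * p * gamma < 1" and calm: "p_calm p f 0 M" and f0: "f 0 = 0"
    and lsc: "lsc_fun f"
begin

definition calm_ratio :: real where
  "calm_ratio = (M * p * gamma) powr (1 / p)"

lemma calm_ratio: "0 < calm_ratio" "calm_ratio < 1" "calm_ratio powr p = M * p * gamma"
proof -
  have pos: "M * p * gamma > 0"
    using M p gamma by simp
  then show "0 < calm_ratio"
    using M p gamma by (simp add: calm_ratio_def)
  have "(M * p * gamma) powr (1 / p) < 1 powr (1 / p)"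
    by (rule powr_less_mono2) (use pos Mpg p in auto)
  then show "calm_ratio < 1"
    by (simp add: calm_ratio_def)
  show "calm_ratio powr p = M * p * gamma"
    using pos p by (simp add: calm_ratio_def powr_powr)
qed

lemma f_ge_calm: "ereal (- M * norm y powr p) \<le> f y"
proof (cases "y = 0")
  case False
  then have "0 < f y + ereal (M * norm y powr p)"
    using calm f0 by (simp add: p_calm_def)
  then show ?thesis
    by (cases "f y") auto
qed (simp add: f0)

text \<open>Any \<open>y\<close> doing at least as well as \<open>0\<close> in the prox objective at \<open>x\<close> is \<open>O(\<parallel>x\<parallel>)\<close>: the calmness
  term \<open>M\<parallel>y\<parallel>\<^sup>p = (calm_ratio \<parallel>y\<parallel>)\<^sup>p/(p\<gamma>)\<close> is absorbed by superadditivity of \<open>t\<^sup>p\<close>.\<close>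

lemma sublevel_bounds:
  assumes "f y + ereal (norm (x - y) powr p / (p * gamma)) \<le> ereal (norm x powr p / (p * gamma))"
  shows "norm y \<le> 2 / (1 - calm_ratio) * norm x" "\<bar>f y\<bar> \<noteq> \<infinity>"
    "real_of_ereal (f y) \<le> norm x powr p / (p * gamma)"
proof -
  obtain r where r: "f y = ereal r"
    using assms f_ge_calm[of y] by (cases "f y") auto
  then show "\<bar>f y\<bar> \<noteq> \<infinity>"
    by simp
  have objective: "r + norm (x - y) powr p / (p * gamma) \<le> norm x powr p / (p * gamma)"
    using assms r by simp
  moreover have "0 \<le> norm (x - y) powr p / (p * gamma)"
    using p gamma by simp
  ultimately show "real_of_ereal (f y) \<le> norm x powr p / (p * gamma)"
    using r by simp
  have "- M * norm y powr p \<le> r"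
    using f_ge_calm[of y] r by simp
  with objective have "norm (x - y) powr p / (p * gamma) \<le> norm x powr p / (p * gamma) + M * norm y powr p"
    by linarith
  then have "norm (x - y) powr p \<le> norm x powr p + (M * p * gamma) * norm y powr p"
    using p gamma by (simp add: field_simps)
  also have "\<dots> = norm x powr p + (calm_ratio * norm y) powr p"
    using calm_ratio by (simp add: powr_mult)
  also have "\<dots> \<le> (norm x + calm_ratio * norm y) powr p"
    by (rule powr_superadditive) (use p calm_ratio in auto)
  finally have "norm (x - y) \<le> norm x + calm_ratio * norm y"
    using p calm_ratio by (smt (verit) mult_nonneg_nonneg norm_ge_zero powr_less_mono2)
  moreover have "norm y \<le> norm x + norm (x - y)"
    using norm_triangle_ineq4[of x "x - y"] by simp
  ultimately have "(1 - calm_ratio) * norm y \<le> 2 * norm x"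
    by (simp add: algebra_simps)
  then show "norm y \<le> 2 / (1 - calm_ratio) * norm x"
    using calm_ratio by (simp add: field_simps)
qed

lemma prox_exists: "\<exists>y. y \<in> prox_p p gamma f x"
proof -
  define G where "G z = f z + ereal (norm (x - z) powr p / (p * gamma))" for z
  define K where "K = cball (0::'a) (2 / (1 - calm_ratio) * norm x)"
  have "0 \<le> 2 / (1 - calm_ratio) * norm x"
    using calm_ratio by (intro mult_nonneg_nonneg divide_nonneg_pos) auto
  then have K: "compact K" "K \<noteq> {}" "0 \<in> K"
    by (auto simp: K_def)
  have "((\<lambda>z. norm (x - z) powr p / (p * gamma)) \<longlongrightarrow> norm (x - y) powr p / (p * gamma)) (at y)" for y
    using p gamma by (intro tendsto_intros) auto
  then have "eventually (\<lambda>z. c < G z) (at y)" if "c < G y" for y c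
    using lsc_fun_add_continuous[OF lsc] that unfolding G_def by blast
  then obtain y where y: "y \<in> K" "\<And>z. z \<in> K \<Longrightarrow> G y \<le> G z"
    using lsc_attains_inf[OF K(1,2)] by blast
  have "G y \<le> G z" for z
  proof (cases "G z \<le> G 0")
    case True
    then have "z \<in> K"
      using sublevel_bounds(1)[of z x] by (simp add: G_def K_def f0)
    then show ?thesis
      using y by blast
  next
    case False
    with K(3) show ?thesis
      using y(2)[of 0] False by simp
  qed
  then show ?thesis
    by (auto simp: prox_p_def G_def)
qed

lemma prox_bounds:
  assumes "y \<in> prox_p p gamma f x"
  shows "norm y \<le> 2 / (1 - calm_ratio) * norm x" "\<bar>f y\<bar> \<noteq> \<infinity>"
    "real_of_ereal (f y) \<le> norm x powr p / (p * gamma)"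
proof -
  have "f y + ereal (norm (x - y) powr p / (p * gamma)) \<le> ereal (norm x powr p / (p * gamma))"
    using assms unfolding prox_p_def by (auto simp: f0 dest: spec[of _ 0])
  then show "norm y \<le> 2 / (1 - calm_ratio) * norm x" "\<bar>f y\<bar> \<noteq> \<infinity>"
    "real_of_ereal (f y) \<le> norm x powr p / (p * gamma)"
    by (rule sublevel_bounds)+
qed

lemma prox_lower_model:
  assumes y: "y \<in> prox_p p gamma f x"
  shows "f y + ereal (((1 / gamma) *\<^sub>R duality_map p (x - y)) \<bullet> (z - y) - 4 / gamma * norm (z - y) powr p)
    \<le> f z"
proof -
  define J where "J = duality_map p (x - y)"
  have "norm (x - z) powr p - norm (x - y) powr p \<le> p * (J \<bullet> (y - z)) + 4 * p * norm (z - y) powr p"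
    using norm_powr_le_linearization[OF p, of "x - z" "x - y"] by (simp add: J_def norm_minus_commute)
  then have "(norm (x - z) powr p - norm (x - y) powr p) / (p * gamma)
      \<le> (p * (J \<bullet> (y - z)) + 4 * p * norm (z - y) powr p) / (p * gamma)"
    using p gamma by (intro divide_right_mono) auto
  also have "\<dots> = - (((1 / gamma) *\<^sub>R J) \<bullet> (z - y)) + 4 / gamma * norm (z - y) powr p"
    using p gamma by (simp add: field_simps inner_diff_right)
  finally have model: "((1 / gamma) *\<^sub>R J) \<bullet> (z - y) - 4 / gamma * norm (z - y) powr p
      \<le> norm (x - y) powr p / (p * gamma) - norm (x - z) powr p / (p * gamma)"
    by (simp add: diff_divide_distrib)
  obtain v where v: "f y = ereal v"
    using prox_bounds(2)[OF y] by (cases "f y") auto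
  have "f y + ereal (norm (x - y) powr p / (p * gamma)) \<le> f z + ereal (norm (x - z) powr p / (p * gamma))"
    using y by (simp add: prox_p_def)
  then show ?thesis
    using model f_ge_calm[of z] v unfolding J_def by (cases "f z") auto
qed

lemma prox_frechet_subgradient:
  assumes y: "y \<in> prox_p p gamma f x"
  shows "(1 / gamma) *\<^sub>R duality_map p (x - y) \<in> frechet_subdiff f y"
proof -
  define \<zeta> where "\<zeta> = (1 / gamma) *\<^sub>R duality_map p (x - y)"
  have "\<exists>d>0. \<forall>z. norm (z - y) < d \<longrightarrow>
      ereal (real_of_ereal (f y) + \<zeta> \<bullet> (z - y) - e * norm (z - y)) \<le> f z" if e: "e > 0" for e
  proof (intro exI conjI allI impI)
    define d where "d = (e * gamma / 4) powr (1 / (p - 1))"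
    show "d > 0"
      using e gamma by (simp add: d_def)
    fix z assume z: "norm (z - y) < d"
    have "norm (z - y) powr (p - 1) \<le> d powr (p - 1)"
      using p z by (intro powr_mono2) auto
    also have "\<dots> = e * gamma / 4"
      using e gamma p by (simp add: d_def powr_powr)
    finally have "4 / gamma * norm (z - y) powr (p - 1) \<le> e"
      using gamma by (simp add: field_simps)
    then have "4 / gamma * norm (z - y) powr (p - 1) * norm (z - y) \<le> e * norm (z - y)"
      by (rule mult_right_mono) simp
    then have "4 / gamma * norm (z - y) powr p \<le> e * norm (z - y)"
      using powr_diff_one_mult[of "norm (z - y)" p] by (simp add: mult.assoc)
    then have "ereal (real_of_ereal (f y) + \<zeta> \<bullet> (z - y) - e * norm (z - y))
        \<le> f y + ereal (\<zeta> \<bullet> (z - y) - 4 / gamma * norm (z - y) powr p)"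
      using prox_bounds(2)[OF y] by (cases "f y") auto
    also have "\<dots> \<le> f z"
      unfolding \<zeta>_def by (rule prox_lower_model[OF y])
    finally show "ereal (real_of_ereal (f y) + \<zeta> \<bullet> (z - y) - e * norm (z - y)) \<le> f z" .
  qed
  then show ?thesis
    using prox_bounds(2)[OF y] unfolding frechet_subdiff_def \<zeta>_def by blast
qed

lemma prox_near_0:
  assumes "0 < \<delta>"
  shows "\<exists>r>0. \<forall>x y. norm x < r \<longrightarrow> y \<in> prox_p p gamma f x \<longrightarrow>
    norm y \<le> \<delta> \<and> norm (x - y) \<le> \<delta> \<and> f y < ereal \<delta> \<and>
    norm ((1 / gamma) *\<^sub>R duality_map p (x - y)) \<le> \<delta>"
proof -
  define C where "C = 2 / (1 - calm_ratio)"
  have C: "0 < C"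
    using calm_ratio by (simp add: C_def)
  obtain r1 where r1: "r1 > 0" "\<And>t. 0 \<le> t \<Longrightarrow> t \<le> r1 \<Longrightarrow> 1 / gamma * t powr (p - 1) \<le> \<delta>"
    using powr_small_bound[of "1 / gamma" "p - 1" \<delta>] gamma p assms by auto
  obtain r2 where r2: "r2 > 0" "\<And>t. 0 \<le> t \<Longrightarrow> t \<le> r2 \<Longrightarrow> 1 / (p * gamma) * t powr p \<le> \<delta> / 2"
    using powr_small_bound[of "1 / (p * gamma)" p "\<delta> / 2"] gamma p assms by auto
  define r where "r = min (min \<delta> r1 / (1 + C)) r2"
  have "r \<le> min \<delta> r1 / (1 + C)"
    by (simp add: r_def)
  then have "(1 + C) * r \<le> min \<delta> r1"
    using C by (simp add: pos_le_divide_eq mult.commute)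
  moreover have "0 < r" "r \<le> r2"
    using r1 r2 C assms by (simp_all add: r_def)
  ultimately have r: "0 < r" "(1 + C) * r \<le> \<delta>" "(1 + C) * r \<le> r1" "r \<le> r2"
    by simp_all
  have "norm y \<le> \<delta> \<and> norm (x - y) \<le> \<delta> \<and> f y < ereal \<delta> \<and>
      norm ((1 / gamma) *\<^sub>R duality_map p (x - y)) \<le> \<delta>"
    if x: "norm x < r" and y: "y \<in> prox_p p gamma f x" for x y
  proof (intro conjI)
    have "C * norm x \<le> C * r"
      using x C by simp
    then have ny: "norm y \<le> C * r"
      using prox_bounds(1)[OF y] unfolding C_def[symmetric] by linarith
    moreover have "(1 + C) * r = r + C * r"
      by (simp add: algebra_simps)
    ultimately show "norm y \<le> \<delta>"
      using r by linarith
    have nxy: "norm (x - y) \<le> (1 + C) * r"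
      using norm_triangle_ineq4[of x y] x ny by (simp add: algebra_simps)
    then show "norm (x - y) \<le> \<delta>"
      using r by simp
    have "real_of_ereal (f y) \<le> 1 / (p * gamma) * norm x powr p"
      using prox_bounds(3)[OF y] by simp
    also have "\<dots> \<le> \<delta> / 2"
      using r2(2)[of "norm x"] x r by simp
    finally show "f y < ereal \<delta>"
      using prox_bounds(2)[OF y] assms by (cases "f y") auto
    have "norm ((1 / gamma) *\<^sub>R duality_map p (x - y)) = 1 / gamma * norm (x - y) powr (p - 1)"
      using gamma by (simp add: norm_duality_map)
    also have "\<dots> \<le> \<delta>"
      using r1(2)[of "norm (x - y)"] nxy r by simp
    finally show "norm ((1 / gamma) *\<^sub>R duality_map p (x - y)) \<le> \<delta>" .
  qed
  then show ?thesis
    using r(1) by blast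
qed

lemma env_p_finite: "\<bar>env_p p gamma f x\<bar> \<noteq> \<infinity>"
proof -
  obtain y where y: "y \<in> prox_p p gamma f x"
    using prox_exists by blast
  then show ?thesis
    using prox_bounds(2)[OF y] by (cases "f y") (auto simp: env_p_eq_at_prox[OF y])
qed

lemma env_p_remainder_bound:
  assumes y: "y \<in> prox_p p gamma f x" and y': "y' \<in> prox_p p gamma f x'"
  shows "\<bar>real_of_ereal (env_p p gamma f x') - real_of_ereal (env_p p gamma f x)
      - ((1 / gamma) *\<^sub>R duality_map p (x - y)) \<bullet> (x' - x)\<bar>
    \<le> 4 / gamma * (norm (x' - x) + norm (y' - y)) powr (p - 1) * norm (x' - x)"
proof -
  define h where "h u = norm u powr p / (p * gamma)" for u :: 'a
  define G where "G = (1 / gamma) *\<^sub>R duality_map p (x - y)"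
  define D where "D = (norm (x' - x) + norm (y' - y)) powr (p - 1)"
  obtain v v' where v: "f y = ereal v" "f y' = ereal v'"
    using prox_bounds(2)[OF y] prox_bounds(2)[OF y'] by (cases "f y"; cases "f y'") auto
  have env: "env_p p gamma f x = ereal (v + h (x - y))" "env_p p gamma f x' = ereal (v' + h (x' - y'))"
    using env_p_eq_at_prox[OF y] env_p_eq_at_prox[OF y'] v by (simp_all add: h_def)
  have "env_p p gamma f x' \<le> f y + ereal (h (x' - y))" "env_p p gamma f x \<le> f y' + ereal (h (x - y'))"
    unfolding h_def by (rule env_p_le)+
  then have env_le: "v' + h (x' - y') \<le> v + h (x' - y)" "v + h (x - y) \<le> v' + h (x - y')"
    using env v by simp_all
  have pg: "0 < p * gamma"
    using p gamma by simp
  have Dx: "norm (x' - x) powr (p - 1) \<le> D" and Dy: "norm (y' - y) powr (p - 1) \<le> D"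
    using p by (auto simp: D_def intro: powr_mono2)
  have "norm (x' - y) powr p - norm (x - y) powr p - p * (duality_map p (x - y) \<bullet> (x' - x))
      \<le> 4 * p * norm (x' - x) powr p"
    using norm_powr_le_linearization[OF p, of "x' - y" "x - y"] by simp
  then have "(norm (x' - y) powr p - norm (x - y) powr p) / (p * gamma)
      \<le> (p * (duality_map p (x - y) \<bullet> (x' - x)) + 4 * p * norm (x' - x) powr p) / (p * gamma)"
    using pg by (intro divide_right_mono) auto
  then have "h (x' - y) - h (x - y) \<le> G \<bullet> (x' - x) + 4 / gamma * norm (x' - x) powr p"
    using p gamma by (simp add: h_def G_def diff_divide_distrib add_divide_distrib)
  also have "norm (x' - x) powr p = norm (x' - x) powr (p - 1) * norm (x' - x)"
    by (simp add: powr_diff_one_mult)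
  also have "4 / gamma * (norm (x' - x) powr (p - 1) * norm (x' - x)) \<le> 4 / gamma * (D * norm (x' - x))"
    using Dx gamma by (intro mult_left_mono mult_right_mono) auto
  finally have upper: "h (x' - y) - h (x - y) \<le> G \<bullet> (x' - x) + 4 / gamma * D * norm (x' - x)"
    by (simp add: mult.assoc)
  have "norm (x - y') powr p + p * (duality_map p (x - y') \<bullet> (x' - x)) \<le> norm (x' - y') powr p"
    using norm_powr_ge_linearization[OF p(1), of "x - y'" "x' - y'"] by simp
  then have lin: "((1 / gamma) *\<^sub>R duality_map p (x - y')) \<bullet> (x' - x) \<le> h (x' - y') - h (x - y')"
    using pg p gamma by (simp add: h_def field_simps)
  have "(G - (1 / gamma) *\<^sub>R duality_map p (x - y')) \<bullet> (x' - x)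
      \<le> norm (G - (1 / gamma) *\<^sub>R duality_map p (x - y')) * norm (x' - x)"
    by (rule norm_cauchy_schwarz)
  also have "\<dots> \<le> 4 / gamma * D * norm (x' - x)"
  proof (rule mult_right_mono)
    have "norm (duality_map p (x - y) - duality_map p (x - y')) \<le> 4 * norm (y' - y) powr (p - 1)"
      using duality_map_holder[OF p, of "x - y" "x - y'"] by simp
    then show "norm (G - (1 / gamma) *\<^sub>R duality_map p (x - y')) \<le> 4 / gamma * D"
      using Dy gamma by (simp add: G_def divide_right_mono flip: scaleR_diff_right)
  qed simp
  finally have lower: "G \<bullet> (x' - x) - 4 / gamma * D * norm (x' - x) \<le> h (x' - y') - h (x - y')"
    using lin by (simp add: inner_diff_left)
  show ?thesis
    using upper lower env env_le by (simp add: G_def D_def abs_le_iff)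
qed

lemma env_p_has_derivative:
  assumes U: "open U" and P: "\<And>z. z \<in> U \<Longrightarrow> P z \<in> prox_p p gamma f z"
    and cont: "continuous_on U P" and x: "x \<in> U"
  shows "((\<lambda>z. real_of_ereal (env_p p gamma f z))
    has_derivative (\<lambda>h. ((1 / gamma) *\<^sub>R duality_map p (x - P x)) \<bullet> h)) (at x)"
  unfolding has_derivative_iff_norm
proof (intro conjI)
  show "bounded_linear (\<lambda>h. ((1 / gamma) *\<^sub>R duality_map p (x - P x)) \<bullet> h)"
    by (rule bounded_linear_inner_right)
  define B where "B z = 4 / gamma * (norm (z - x) + norm (P z - P x)) powr (p - 1)" for z
  have "(P \<longlongrightarrow> P x) (at x)"
    using cont U x by (simp add: continuous_on_eq_continuous_at isCont_def)
  then have "(B \<longlongrightarrow> 4 / gamma * (norm (x - x) + norm (P x - P x)) powr (p - 1)) (at x)"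
    unfolding B_def using p by (intro tendsto_intros) auto
  then have B: "(B \<longlongrightarrow> 0) (at x)"
    using p by simp
  have "eventually (\<lambda>z. norm (norm (real_of_ereal (env_p p gamma f z) - real_of_ereal (env_p p gamma f x)
      - ((1 / gamma) *\<^sub>R duality_map p (x - P x)) \<bullet> (z - x)) / norm (z - x)) \<le> B z) (at x)"
    unfolding eventually_at_topological
  proof (intro exI[of _ U] conjI ballI impI)
    fix z assume "z \<in> U" "z \<noteq> x"
    then show "norm (norm (real_of_ereal (env_p p gamma f z) - real_of_ereal (env_p p gamma f x)
      - ((1 / gamma) *\<^sub>R duality_map p (x - P x)) \<bullet> (z - x)) / norm (z - x)) \<le> B z"
      using env_p_remainder_bound[OF P[OF x] P[of z]] by (simp add: B_def divide_le_eq)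
  qed (use U x in auto)
  then show "((\<lambda>z. norm (real_of_ereal (env_p p gamma f z) - real_of_ereal (env_p p gamma f x)
      - ((1 / gamma) *\<^sub>R duality_map p (x - P x)) \<bullet> (z - x)) / norm (z - x)) \<longlongrightarrow> 0) (at x)"
    using B by (rule Lim_null_comparison)
qed

lemma prox_locally_lipschitz:
  assumes q: "2 \<le> q" and eps: "0 < eps" and rho: "0 < rho"
    and preg: "q_prox_regular q f 0 0 eps rho" and p2: "p = 2 \<Longrightarrow> rho * gamma < 1"
  shows "\<exists>r>0. \<exists>L\<ge>0. \<forall>x1 x2 y1 y2. norm x1 < r \<longrightarrow> norm x2 < r \<longrightarrow>
    y1 \<in> prox_p p gamma f x1 \<longrightarrow> y2 \<in> prox_p p gamma f x2 \<longrightarrow> norm (y2 - y1) \<le> L * norm (x2 - x1)"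
proof -
  have c: "0 < rho * gamma"
    using rho gamma by simp
  obtain \<theta> K S where \<theta>: "0 \<le> \<theta>" "\<theta> < 1" and K: "0 < K" "4 / ((1 - \<theta>) * (p - 1)) \<le> K"
    and S: "0 < S" and small: "\<And>s. 0 < s \<Longrightarrow> s \<le> S \<Longrightarrow>
      rho * gamma * (1 + 1 / K) powr q * s powr (q - p) \<le> \<theta> * (p - 1)"
    using perturbation_constants[OF p q c p2] by blast
  define \<delta> where "\<delta> = min eps (S / 2)"
  obtain r where r: "0 < r" and near: "\<And>x y. norm x < r \<Longrightarrow> y \<in> prox_p p gamma f x \<Longrightarrow>
      norm y \<le> \<delta> \<and> norm (x - y) \<le> \<delta> \<and> f y < ereal \<delta> \<and> norm ((1 / gamma) *\<^sub>R duality_map p (x - y)) \<le> \<delta>"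
    using prox_near_0[of \<delta>] eps S by (auto simp: \<delta>_def)
  have "norm (y2 - y1) \<le> (1 + K) * norm (x2 - x1)"
    if x: "norm x1 < r" "norm x2 < r" and y: "y1 \<in> prox_p p gamma f x1" "y2 \<in> prox_p p gamma f x2"
    for x1 x2 y1 y2
  proof (rule duality_map_perturbation_bound[OF p q \<theta> K, where a = "x2 - y2" and b = "x1 - y1"])
    note near1 = near[OF x(1) y(1)] and near2 = near[OF x(2) y(2)]
    have "\<delta> \<le> eps"
      by (simp add: \<delta>_def)
    then have "- rho * norm (y2 - y1) powr q
        \<le> ((1 / gamma) *\<^sub>R duality_map p (x2 - y2) - (1 / gamma) *\<^sub>R duality_map p (x1 - y1)) \<bullet> (y2 - y1)"
      using near1 near2 f0 frechet_subdiff_subset_limiting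
        prox_frechet_subgradient[OF y(1)] prox_frechet_subgradient[OF y(2)]
      by (intro q_prox_regular_hypomonotone[OF preg]) (auto intro: order_less_le_trans)
    then show "(duality_map p (x2 - y2) - duality_map p (x1 - y1)) \<bullet> (y2 - y1) \<ge> - (rho * gamma) * norm (y2 - y1) powr q"
      using gamma by (simp add: pos_le_divide_eq mult.commute mult.left_commute flip: scaleR_diff_right)
    show "x2 - y2 - (x1 - y1) = x2 - x1 - (y2 - y1)"
      by simp
    show "0 \<le> rho * gamma"
      using c by simp
    have "norm (x2 - y2) + norm (x1 - y1) \<le> S"
      using near1 near2 by (simp add: \<delta>_def)
    then show "rho * gamma * (1 + 1 / K) powr q * (norm (x2 - y2) + norm (x1 - y1)) powr (q - p) \<le> \<theta> * (p - 1)"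
      if "norm (x2 - y2) + norm (x1 - y1) > 0"
      using small that by blast
  qed
  then show ?thesis
    using r K by (intro exI[of _ r] conjI exI[of _ "1 + K"]) auto
qed

lemma lipschitz_prox_imp_holder_regularity:
  assumes r: "0 < r" and L: "0 \<le> L"
    and lip: "\<And>x1 x2 y1 y2. norm x1 < r \<Longrightarrow> norm x2 < r \<Longrightarrow>
      y1 \<in> prox_p p gamma f x1 \<Longrightarrow> y2 \<in> prox_p p gamma f x2 \<Longrightarrow> norm (y2 - y1) \<le> L * norm (x2 - x1)"
    and \<epsilon>: "0 < \<epsilon>" and C: "0 < C1" "0 < C2" and \<beta>: "\<beta>1 < 1" "\<beta>2 < p - 1"
  shows "\<exists>U. open U \<and> 0 \<in> U \<and> U \<subseteq> ball 0 \<epsilon> \<and>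
    (\<forall>x\<in>U. \<exists>!y. y \<in> prox_p p gamma f x) \<and>
    (\<forall>x1\<in>U. \<forall>x2\<in>U. \<forall>y1 y2. y1 \<in> prox_p p gamma f x1 \<longrightarrow> y2 \<in> prox_p p gamma f x2 \<longrightarrow>
       norm (y2 - y1) \<le> C1 * norm (x2 - x1) powr \<beta>1) \<and>
    (\<forall>x\<in>U. \<bar>env_p p gamma f x\<bar> \<noteq> \<infinity>) \<and>
    (\<exists>g. (\<forall>x\<in>U. ((\<lambda>y. real_of_ereal (env_p p gamma f y)) has_derivative (\<lambda>h. g x \<bullet> h)) (at x)) \<and>
       (\<forall>x1\<in>U. \<forall>x2\<in>U. norm (g x2 - g x1) \<le> C2 * norm (x2 - x1) powr \<beta>2))"
proof -
  obtain \<delta>1 where \<delta>1: "0 < \<delta>1" "\<And>t. 0 \<le> t \<Longrightarrow> t \<le> \<delta>1 \<Longrightarrow> L * t powr 1 \<le> C1 * t powr \<beta>1"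
    using powr_dominated_near_0[of L \<beta>1 1 C1] L C \<beta> by auto
  obtain \<delta>2 where \<delta>2: "0 < \<delta>2" "\<And>t. 0 \<le> t \<Longrightarrow> t \<le> \<delta>2 \<Longrightarrow>
      4 / gamma * (1 + L) powr (p - 1) * t powr (p - 1) \<le> C2 * t powr \<beta>2"
    using powr_dominated_near_0[of "4 / gamma * (1 + L) powr (p - 1)" \<beta>2 "p - 1" C2] gamma C \<beta> by auto
  define U where "U = ball (0::'a) (min (min r \<epsilon>) (min \<delta>1 \<delta>2 / 2))"
  have U: "open U" "0 \<in> U" "U \<subseteq> ball 0 \<epsilon>"
    using r \<epsilon> \<delta>1 \<delta>2 by (auto simp: U_def)
  have near: "norm x1 < r" "norm x2 < r" "norm (x2 - x1) \<le> \<delta>1" "norm (x2 - x1) \<le> \<delta>2"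
    if "x1 \<in> U" "x2 \<in> U" for x1 x2
    using that norm_triangle_ineq4[of x2 x1] by (auto simp: U_def)
  obtain P where P: "\<And>x. P x \<in> prox_p p gamma f x"
    using prox_exists by metis
  have P_lip: "norm (P x2 - P x1) \<le> L * norm (x2 - x1)" if "x1 \<in> U" "x2 \<in> U" for x1 x2
    using lip[OF near(1,2)[OF that] P P] .
  have unique: "\<exists>!y. y \<in> prox_p p gamma f x" if "x \<in> U" for x
    using P lip[OF near(1,2)[OF that that]] by auto
  have holder: "norm (y2 - y1) \<le> C1 * norm (x2 - x1) powr \<beta>1"
    if "x1 \<in> U" "x2 \<in> U" "y1 \<in> prox_p p gamma f x1" "y2 \<in> prox_p p gamma f x2" for x1 x2 y1 y2
    using lip[OF near(1,2)[OF that(1,2)] that(3,4)] \<delta>1(2)[OF _ near(3)[OF that(1,2)]] by simp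
  have "continuous_on U P"
    using P_lip L by (intro lipschitz_on_continuous_on lipschitz_onI) (auto simp: dist_norm)
  define G where "G x = (1 / gamma) *\<^sub>R duality_map p (x - P x)" for x
  have deriv: "((\<lambda>y. real_of_ereal (env_p p gamma f y)) has_derivative (\<lambda>h. G x \<bullet> h)) (at x)"
    if "x \<in> U" for x
    unfolding G_def using env_p_has_derivative[OF U(1) P \<open>continuous_on U P\<close> that] .
  have grad: "norm (G x2 - G x1) \<le> C2 * norm (x2 - x1) powr \<beta>2" if "x1 \<in> U" "x2 \<in> U" for x1 x2
    unfolding G_def using prox_gradient_holder[OF p gamma L P_lip[OF that]] \<delta>2(2)[OF _ near(4)[OF that]]
    by (simp add: mult.assoc)
  show ?thesis
    using U unique holder env_p_finite deriv grad
    by (intro exI[of _ U] exI[of _ G] conjI ballI allI impI) auto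
qed
end

lemma step_size_bounds:
  fixes p M eps rho gamma :: real
  assumes p: "1 < p" "p \<le> 2" and M: "0 < M" and eps: "0 < eps" and rho: "0 < rho"
    and gamma: "0 < gamma" "gamma < min (2 powr (1 - p) / (M * p)) (kappa p * (2 * eps) powr (p - 2) / rho)"
  shows "M * p * gamma < 1" "rho * gamma * (2 * eps) powr (2 - p) < kappa p" "p = 2 \<Longrightarrow> rho * gamma < 1"
proof -
  have "2 powr (1 - p) < 1"
    using p by (intro powr_less_one) auto
  then show "M * p * gamma < 1"
    using gamma M p by (simp add: field_simps)
  have "rho * gamma < kappa p * (2 * eps) powr (p - 2)"
    using gamma rho by (simp add: field_simps)
  then have "rho * gamma * (2 * eps) powr (2 - p) < kappa p * ((2 * eps) powr (p - 2) * (2 * eps) powr (2 - p))"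
    using eps by (simp add: mult.assoc)
  also have "\<dots> = kappa p"
    using eps by (simp flip: powr_add)
  finally show gap: "rho * gamma * (2 * eps) powr (2 - p) < kappa p" .
  then show "p = 2 \<Longrightarrow> rho * gamma < 1"
    using eps by (simp add: kappa_def)
qed

theorem theorem7:
  fixes f :: "'a::euclidean_space \<Rightarrow> ereal"
    and p q M eps rho gamma :: real
  assumes p: "1 < p" "p \<le> 2"
    and proper: "proper_fun f" and lsc: "lsc_fun f"
    and M: "M > 0" and calm: "p_calm p f 0 M"
    and f0: "f 0 = 0"
    and q: "q \<ge> 2"
    and zero_sub: "0 \<in> limiting_subdiff f 0"
    and eps: "0 < eps" "eps < 1/2" and rho: "rho > 0"
    and preg: "q_prox_regular q f 0 0 eps rho"
    and gamma: "0 < gamma"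
      "gamma < min (2 powr (1 - p) / (M * p)) (kappa p * (2 * eps) powr (p - 2) / rho)"
  shows "\<exists>U. open U \<and> 0 \<in> U \<and> U \<subseteq> ball 0 eps \<and>
     (let Lp = (4 * eps * (kappa p + 1) / (kappa p - rho * gamma * (2 * eps) powr (2 - p))) powr (1 / q);
          LLp = 2 powr (2 - p) / gamma * ((2 * eps) powr ((q - 1) / q) + Lp) powr (p - 1)
      in (\<forall>x\<in>U. \<exists>!y. y \<in> prox_p p gamma f x)
       \<and> (\<forall>x1\<in>U. \<forall>x2\<in>U. \<forall>y1 y2. y1 \<in> prox_p p gamma f x1 \<longrightarrow> y2 \<in> prox_p p gamma f x2 \<longrightarrow>
             norm (y2 - y1) \<le> Lp * norm (x2 - x1) powr (1 / q))
       \<and> (\<forall>x\<in>U. \<bar>env_p p gamma f x\<bar> \<noteq> \<infinity>)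
       \<and> (\<exists>g. (\<forall>x\<in>U. ((\<lambda>y. real_of_ereal (env_p p gamma f y)) has_derivative (\<lambda>h. g x \<bullet> h)) (at x))
            \<and> (\<forall>x1\<in>U. \<forall>x2\<in>U. norm (g x2 - g x1) \<le> LLp * norm (x2 - x1) powr ((p - 1) / q))))"
proof -
  note step = step_size_bounds[OF p M eps(1) rho gamma]
  interpret calm_prox f p gamma M
    using p gamma(1) M step(1) calm f0 lsc by unfold_locales
  obtain r L where r: "0 < r" "0 \<le> L" and lip: "\<And>x1 x2 y1 y2. norm x1 < r \<Longrightarrow> norm x2 < r \<Longrightarrow>
      y1 \<in> prox_p p gamma f x1 \<Longrightarrow> y2 \<in> prox_p p gamma f x2 \<Longrightarrow> norm (y2 - y1) \<le> L * norm (x2 - x1)"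
    using prox_locally_lipschitz[OF q eps(1) rho preg step(3)] by blast
  define Lp where "Lp = (4 * eps * (kappa p + 1) / (kappa p - rho * gamma * (2 * eps) powr (2 - p))) powr (1 / q)"
  define LLp where "LLp = 2 powr (2 - p) / gamma * ((2 * eps) powr ((q - 1) / q) + Lp) powr (p - 1)"
  have "0 < rho * gamma * (2 * eps) powr (2 - p)"
    using rho gamma eps by simp
  then have Lp: "0 < Lp"
    using step(2) eps by (simp add: Lp_def)
  then have "0 < (2 * eps) powr ((q - 1) / q) + Lp"
    by (simp add: add_nonneg_pos)
  then have LLp: "0 < LLp"
    using gamma by (simp add: LLp_def)
  have exponents: "1 / q < 1" "(p - 1) / q < p - 1"
    using mult_strict_left_mono[of 1 q "p - 1"] p q by (simp_all add: divide_less_eq)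
  show ?thesis
    unfolding Let_def Lp_def[symmetric] LLp_def[symmetric]
    by (rule lipschitz_prox_imp_holder_regularity[OF r lip eps(1) Lp LLp exponents])
qed

end
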